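(* Let $n\ge3$ and $\omega\ge\lfloor 3n/4\rfloor$ be integers. Then the sequences in the set $\{\mathbf{s}_n\in\mathcal{R}(n,\lceil n/2\rceil): add(\mathbf{s}_n)=\omega-\lceil n/2\rceil\}$ are pairwise shift inequivalent, i.e. no two distinct elements of this set are circular shifts of one another.
   Context: All sequences are binary (entries in $\mathbb{Z}_2$), $\overline{x}=x\oplus1$, $x\bmod d$ is the least nonnegative residue, and $\mathbf{a}^q$ is the concatenation of $q$ copies of $\mathbf a$. For $\mathbf{s}_n=(s_0,\dots,s_{n-1})$, $\mathbf{s}_j=(s_0,\dots,s_{j-1})$. A length-$m$ sequence is periodic if it is the concatenation of $m/e$ copies of a length-$e$ sequence for a proper divisor $e$ of $m$, aperiodic otherwise. Right circular shift: $R^k(\mathbf{s}_n)=(s_{n-k},\dots,s_{n-1},s_0,\dots,s_{n-k-1})$, $0\le k<n$. For $c\ge\lfloor n/2\rfloor$ and $1\le d\le\min\{n-c,\lfloor n/2\rfloor\}$, $\mathcal{B}(n,c,d)$ is the set of aperiodic length-$n$ sequences $\mathbf{s}_n$ with $\mathbf{s}_d$ aperiodic and $\mathbf{s}_{c+d}=(s_0,\dots,s_{d-1})^q(s_0,\dots,s_{r-1},\overline{s_r})$, where $q=\lfloor(c+d-1)/d\rfloor$, $r=c+d-1-qd$, and $s_{c+d},\dots,s_{n-1}$ are arbitrary. $\mathcal{B}(n,c)=\bigcup_{d=1}^{\min\{n-c,\lfloor n/2\rfloor\}}\mathcal{B}(n,c,d)$. For $\mathbf{s}_n\in\mathcal{B}(n,c,d)$,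 $add(\mathbf{s}_n)$ is the integer $t\ge0$ such that $s_{n-1-i}=s_{(d-1-i)\bmod d}$ for $0\le i<t$ and $s_{n-1-t}\neq s_{(d-1-t)\bmod d}$. For $\mathbf{s}_n\in\mathcal{B}(n,c)$, $E(\mathbf{s}_n)=\{R^k(\mathbf{s}_n):0\le k<n\}\cap\mathcal{B}(n,c)$, and $\mathcal{R}(n,c)$ is the set of all $\mathbf{s}\in\mathcal{B}(n,c)$ with $add(\mathbf{s})\ge add(\mathbf a)$ for every $\mathbf a\in E(\mathbf s)$. *)

theory Defs
  imports Main
begin

text \<open>Binary sequences are modelled as lists of booleans (True = 1, False = 0);
  complement is negation.\<close>

definition periodic :: "bool list \<Rightarrow> bool" where
  "periodic s \<longleftrightarrow> (\<exists>e. 0 < e \<and> e < length s \<and> e dvd length s \<and>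
      s = concat (replicate (length s div e) (take e s)))"

definition aperiodic :: "bool list \<Rightarrow> bool" where
  "aperiodic s \<longleftrightarrow> \<not> periodic s"

definition rshift :: "nat \<Rightarrow> bool list \<Rightarrow> bool list" where
  "rshift k s = drop (length s - k) s @ take (length s - k) s"

definition Bd :: "nat \<Rightarrow> nat \<Rightarrow> nat \<Rightarrow> bool list set" where
  "Bd n c d = {s. length s = n \<and> aperiodic s \<and> aperiodic (take d s) \<and>
      (let q = (c + d - 1) div d; r = c + d - 1 - q * d in
        take (c + d) s = concat (replicate q (take d s)) @ take r s @ [\<not> s ! r])}"

definition drange :: "nat \<Rightarrow> nat \<Rightarrow> nat set" where
  "drange n c = {d. 1 \<le> d \<and> d \<le> min (n - c) (n div 2)}"

definition Bc :: "nat \<Rightarrow> nat \<Rightarrow> bool list set" where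
  "Bc n c = (\<Union>d\<in>drange n c. Bd n c d)"

definition add_d :: "nat \<Rightarrow> bool list \<Rightarrow> nat" where
  "add_d d s = (LEAST t. t < length s \<and>
      s ! (length s - 1 - t) \<noteq> s ! nat ((int d - 1 - int t) mod int d))"

text \<open>add of a sequence in B(n,c): d is the (unique) index with s in B(n,c,d).\<close>
definition add :: "nat \<Rightarrow> nat \<Rightarrow> bool list \<Rightarrow> nat" where
  "add n c s = add_d (THE d. d \<in> drange n c \<and> s \<in> Bd n c d) s"

definition Eq :: "nat \<Rightarrow> nat \<Rightarrow> bool list \<Rightarrow> bool list set" where
  "Eq n c s = {rshift k s | k. k < n} \<inter> Bc n c"

definition Rset :: "nat \<Rightarrow> nat \<Rightarrow> bool list set" where
  "Rset n c = {s \<in> Bc n c. \<forall>a\<in>Eq n c s. add n c a \<le> add n c s}"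

end

theory Submission
  imports Defs
begin

text \<open>Read a word of length \<open>n\<close> cyclically, as an \<open>n\<close>-periodic sequence indexed by the
  integers. For \<open>s \<in> B(n,c,d)\<close> the \<open>d\<close>-periodic prefix of length \<open>c + d - 1\<close> and the suffix of
  length \<open>add(s)\<close> that continues the pattern backwards join into one maximal run of period
  \<open>d\<close>: the relation \<open>x i = x (i + d)\<close> holds exactly for \<open>-add(s) \<le> i < c - 1\<close>, i.e. at
  \<open>T = add(s) + c - 1\<close> consecutive positions. A circular shift by \<open>k\<close> translates this run by \<open>k\<close>.
  So if \<open>s\<close> and \<open>R\<^sup>k(s)\<close> both have \<open>add = \<omega> - c\<close>, the cyclic word of \<open>s\<close> carries two
  maximal runs with the same \<open>T\<close>, of periods \<open>d, d' \<le> n/2\<close>, at offsets differing by \<open>k\<close>.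
  Since \<open>4T + 7 \<ge> 3n\<close> these runs are long. If \<open>d < d'\<close>, either the two runs (up to
  translation by \<open>n\<close>) overlap in at least \<open>d + d' - 1\<close> positions, and the Fine--Wilf theorem
  extends the run of period \<open>d\<close> past one of its ends, or a short chain of period steps
  connects the two sides of such an end; both contradict maximality. If \<open>d = d'\<close>, the
  translated run covers one end of the other. Hence \<open>k \<equiv> 0 (mod n)\<close>.\<close>

section \<open>Periods on integer intervals\<close>

definition period_on :: "(int \<Rightarrow> 'a) \<Rightarrow> int \<Rightarrow> int \<Rightarrow> int \<Rightarrow> bool" where
  "period_on x p a b \<longleftrightarrow> (\<forall>i. a \<le> i \<longrightarrow> i + p < b \<longrightarrow> x i = x (i + p))"

lemma period_onD: "period_on x p a b \<Longrightarrow> a \<le> i \<Longrightarrow> i + p < b \<Longrightarrow> x i = x (i + p)"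
  by (simp add: period_on_def)

lemma period_on_mono:
  "period_on x p a b \<Longrightarrow> a \<le> a' \<Longrightarrow> b' \<le> b \<Longrightarrow> period_on x p a' b'"
  by (simp add: period_on_def)

lemma period_on_translate:
  "period_on (\<lambda>i. x (i + c)) p a b \<longleftrightarrow> period_on x p (a + c) (b + c)"
  unfolding period_on_def
proof safe
  fix i assume "\<forall>i. a \<le> i \<longrightarrow> i + p < b \<longrightarrow> x (i + c) = x (i + p + c)" "a + c \<le> i" "i + p < b + c"
  then show "x i = x (i + p)" by (auto dest: spec[of _ "i - c"] simp: algebra_simps)
qed (simp_all add: algebra_simps)

lemma period_on_add_mult:
  assumes "period_on x p a b" "a \<le> i" "i + int m * p < b" "0 < p"
  shows "x (i + int m * p) = x i"
  using assms(3)
proof (induction m)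
  case (Suc m)
  have "x (i + int m * p) = x i"
    using Suc assms(4) by (simp add: algebra_simps)
  moreover have "x (i + int m * p) = x (i + int m * p + p)"
    using period_onD[OF assms(1), of "i + int m * p"] assms(2,4) Suc.prems
    by (simp add: algebra_simps add_increasing2)
  ultimately show ?case by (simp add: algebra_simps)
qed simp

lemma period_on_reduce:
  assumes "period_on x p a b" "0 < p" "a \<le> i" "i < b"
  shows "x (a + (i - a) mod p) = x i"
proof -
  define m where "m = nat ((i - a) div p)"
  have "i = a + (i - a) mod p + int m * p"
    using assms(2,3) by (simp add: m_def pos_imp_zdiv_nonneg_iff)
  then show ?thesis
    using period_on_add_mult[OF assms(1), of "a + (i - a) mod p" m] assms by simp
qed

lemma period_on_dvd:
  assumes "period_on x p a b" "0 < p" "a \<le> i" "i < b" "a \<le> j" "j < b" "p dvd j - i"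
  shows "x i = x j"
proof -
  have "(i - a) mod p = (j - a) mod p"
    using assms(7) by (simp add: mod_eq_dvd_iff dvd_diff_commute)
  then show ?thesis
    using period_on_reduce[OF assms(1,2)] assms(3-6) by metis
qed

lemma period_on_extend:
  assumes "period_on x p a b" "period_on x g a (b - p)" "0 < p" "0 < g" "g dvd p" "a + p \<le> b - p"
  shows "period_on x g a b"
  unfolding period_on_def
proof (intro allI impI)
  fix i assume i: "a \<le> i" "i + g < b"
  have red: "g dvd y - y mod p" for y
    using assms(5) by (simp add: minus_mod_eq_mult_div)
  have "(a + (i + g - a) mod p) - (a + (i - a) mod p)
      = g - ((i + g - a) - (i + g - a) mod p) + ((i - a) - (i - a) mod p)"
    by simp
  then have "g dvd (a + (i + g - a) mod p) - (a + (i - a) mod p)"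
    using dvd_add[OF dvd_diff[OF dvd_refl red] red] by metis
  moreover have "0 \<le> (i - a) mod p" "(i - a) mod p < p" "0 \<le> (i + g - a) mod p" "(i + g - a) mod p < p"
    using assms(3) by simp_all
  ultimately have "x (a + (i - a) mod p) = x (a + (i + g - a) mod p)"
    using assms(6) by (intro period_on_dvd[OF assms(2,4)]) linarith+
  then show "x i = x (i + g)"
    using period_on_reduce[OF assms(1,3)] i assms(4) by simp
qed

lemma period_on_diff:
  assumes "period_on x p a b" "period_on x q a b" "p < q"
  shows "period_on x (q - p) a (b - p)"
  unfolding period_on_def
proof (intro allI impI)
  fix i assume i: "a \<le> i" "i + (q - p) < b - p"
  have "x i = x (i + q)" using period_onD[OF assms(2)] i by simp
  also have "\<dots> = x (i + (q - p))"
    using period_onD[OF assms(1), of "i + (q - p)"] i assms(3) by simp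
  finally show "x i = x (i + (q - p))" .
qed

lemma fine_wilf:
  assumes "period_on x p a b" "period_on x q a b" "0 < p" "0 < q" "p + q - gcd p q \<le> b - a"
  shows "period_on x (gcd p q) a b"
  using assms
proof (induction "nat (p + q)" arbitrary: p q b rule: less_induct)
  case less
  have strict: "period_on x (gcd p' q') a b'"
    if "p' < q'" "nat (p' + q') = nat (p + q)" "period_on x p' a b'" "period_on x q' a b'" "0 < p'"
      "p' + q' - gcd p' q' \<le> b' - a" for p' q' b'
  proof -
    have gcd_eq: "gcd p' (q' - p') = gcd p' q'"
      by (metis gcd.commute gcd_diff1)
    have "gcd p' q' dvd q' - p'" by simp
    then have "gcd p' q' \<le> q' - p'" using that(1) by (simp add: zdvd_imp_le)
    have "period_on x (gcd p' (q' - p')) a (b' - p')"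
    proof (rule less.hyps)
      show "nat (p' + (q' - p')) < nat (p + q)" using that(1,2,5) less.prems(3,4) by simp
      show "period_on x p' a (b' - p')" using that(3) by (rule period_on_mono) (use that(5) in simp_all)
      show "period_on x (q' - p') a (b' - p')" using that(1,3,4) by (rule period_on_diff[rotated 2])
    qed (use that gcd_eq in auto)
    then show ?thesis
      using that gcd_eq \<open>gcd p' q' \<le> q' - p'\<close> by (intro period_on_extend[OF that(3)]) simp_all
  qed
  consider "p < q" | "p = q" | "q < p" by linarith
  then show ?case
  proof cases
    case 3
    then show ?thesis
      using strict[of q p b] less.prems by (simp add: gcd.commute add.commute)
  qed (use strict less.prems in simp_all)
qed

lemma fine_wilf_extend_right:
  assumes "period_on x p a b" "period_on x q a (b + 1)" "0 < p" "p < q" "p + q - gcd p q \<le> b - a"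
  shows "x (b - p) = x b"
proof -
  have "gcd p q \<le> p" using assms(3) by (simp add: zdvd_imp_le)
  then have "q \<le> b - a" using assms(5) by linarith
  have "period_on x q a b" using assms(2) by (rule period_on_mono) simp_all
  then have "period_on x (gcd p q) a b" by (rule fine_wilf[OF assms(1)]) (use assms(3-5) in simp_all)
  then have "x (b - p) = x (b - q)"
    by (rule period_on_dvd) (use assms(3,4) \<open>q \<le> b - a\<close> in simp_all)
  also have "\<dots> = x b"
    using period_onD[OF assms(2), of "b - q"] assms(3,4) \<open>q \<le> b - a\<close> by simp
  finally show ?thesis .
qed

lemma fine_wilf_extend_left:
  assumes "period_on x p a b" "period_on x q (a - 1) b" "0 < p" "p < q" "p + q - gcd p q \<le> b - a"
  shows "x (a - 1) = x (a - 1 + p)"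
proof -
  have "gcd p q \<le> p" using assms(3) by (simp add: zdvd_imp_le)
  then have "q \<le> b - a" using assms(5) by linarith
  have "period_on x q a b" using assms(2) by (rule period_on_mono) simp_all
  then have "period_on x (gcd p q) a b" by (rule fine_wilf[OF assms(1)]) (use assms(3-5) in simp_all)
  then have "x (a - 1 + q) = x (a - 1 + p)"
    by (rule period_on_dvd) (use assms(3,4) \<open>q \<le> b - a\<close> in simp_all)
  moreover have "x (a - 1) = x (a - 1 + q)"
    using period_onD[OF assms(2), of "a - 1"] assms(3,4) \<open>q \<le> b - a\<close> by simp
  ultimately show ?thesis by simp
qed

section \<open>Maximal periodic runs\<close>

lemma periodic_add_mult:
  fixes x :: "int \<Rightarrow> 'a"
  assumes "\<forall>i. x (i + n) = x i"
  shows "x (i + m * n) = x i"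
proof (induction m rule: int_induct[where k = 0])
  case (step1 m)
  then show ?case using assms[rule_format, of "i + m * n"] by (simp add: algebra_simps)
next
  case (step2 m)
  then show ?case using assms[rule_format, of "i + (m - 1) * n"] by (simp add: algebra_simps)
qed simp

text \<open>\<open>T\<close> counts the positions \<open>i\<close> with \<open>x i = x (i + p)\<close>; the run itself covers
  \<open>[a, a + T + p)\<close>.\<close>

definition maximal_run :: "(int \<Rightarrow> 'a) \<Rightarrow> int \<Rightarrow> int \<Rightarrow> int \<Rightarrow> bool" where
  "maximal_run x p a T \<longleftrightarrow>
     period_on x p a (a + T + p) \<and> x (a - 1) \<noteq> x (a - 1 + p) \<and> x (a + T) \<noteq> x (a + T + p)"

lemma maximal_run_translate:
  "maximal_run (\<lambda>i. x (i + c)) p a T \<longleftrightarrow> maximal_run x p (a + c) T"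
  by (simp add: maximal_run_def period_on_translate algebra_simps)

lemma maximal_run_of_agreement:
  assumes y: "\<forall>i. y (i + p) = y i" and "1 \<le> p" "a + p \<le> b"
    and agree: "\<And>i. a \<le> i \<Longrightarrow> i < b \<Longrightarrow> x i = y i"
    and "x (a - 1) \<noteq> y (a - 1)" "x b \<noteq> y b"
  shows "maximal_run x p a (b - a - p)"
  unfolding maximal_run_def period_on_def
proof (intro conjI allI impI)
  fix i assume "a \<le> i" "i + p < a + (b - a - p) + p"
  then show "x i = x (i + p)" using agree[of i] agree[of "i + p"] y assms(2) by simp
next
  show "x (a - 1) \<noteq> x (a - 1 + p)"
    using agree[of "a - 1 + p"] y[rule_format, of "a - 1"] assms(2,3,5) by simp
next
  show "x (a + (b - a - p)) \<noteq> x (a + (b - a - p) + p)"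
    using agree[of "b - p"] y[rule_format, of "b - p"] assms(2,3,6) by simp
qed

lemma maximal_run_add_mult:
  assumes "\<forall>i. x (i + n) = x i" "maximal_run x p a T"
  shows "maximal_run x p (a + m * n) T"
proof -
  have "(\<lambda>i. x (i + m * n)) = x" using periodic_add_mult[OF assms(1)] by blast
  then show ?thesis using maximal_run_translate[of x "m * n" p a T] assms(2) by simp
qed

text \<open>In the first two cases the run of period \<open>d'\<close> at \<open>k\<close> (or its translate by \<open>-n\<close>)
  overlaps the run of period \<open>d\<close> at \<open>0\<close> in at least \<open>d + d' - 1\<close> positions; in the others a
  short chain of period steps crosses an end of the run at \<open>0\<close>.\<close>

lemma long_run_offset_cases:
  fixes n d d' T k :: int
  assumes "3 \<le> n" "1 \<le> d" "d < d'" "2 * d' \<le> n" "3 * n \<le> 4 * T + 7" "T < n" "0 < k" "k < n"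
  obtains (overlap_right) "d' - 1 \<le> T - k" | (overlap_left) "d - 1 \<le> k - n + T"
    | (right) "d < k" "k \<le> T" "n \<le> T + d'"
    | (left) "k + d' < n" "n \<le> T + d'" "n + d \<le> T + d' + k"
    | (middle) "n = 3 * d + d'" "2 * d \<le> T" "k < 3 * d" "3 * d \<le> k + T"
  using assms by smt

lemma no_shifted_maximal_run_longer_period:
  assumes per: "\<forall>i. x (i + n) = x i"
    and "3 \<le> n" "1 \<le> d" "d < d'" "2 * d' \<le> n" "3 * n \<le> 4 * T + 7" "0 < k" "k < n"
    and P: "maximal_run x d 0 T" and Q: "maximal_run x d' k T"
  shows False
proof -
  have Pper: "period_on x d 0 (T + d)" and Pleft: "x (-1) \<noteq> x (d - 1)"
    and Pright: "x T \<noteq> x (T + d)"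
    using P by (simp_all add: maximal_run_def)
  have Qper: "period_on x d' k (k + T + d')" using Q by (simp add: maximal_run_def)
  have "maximal_run x d (0 + 1 * n) T" "maximal_run x d (0 + (-1) * n) T"
    "maximal_run x d' (k + (-1) * n) T"
    using maximal_run_add_mult[OF per] P Q by blast+
  then have Pper_next: "period_on x d n (n + T + d)" and Pper_prev: "period_on x d (-n) (-n + T + d)"
    and Qper_prev: "period_on x d' (k - n) (k - n + T + d')"
    by (simp_all add: maximal_run_def)
  have "T < n"
  proof (rule ccontr)
    assume "\<not> T < n"
    then show False using period_onD[OF Pper_prev, of "-1"] Pleft \<open>3 \<le> n\<close> by simp
  qed
  have gcd_pos: "1 \<le> gcd d d'" using \<open>1 \<le> d\<close> by (simp add: int_one_le_iff_zero_less)
  show False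
  proof (cases rule: long_run_offset_cases[OF assms(2-6) \<open>T < n\<close> assms(7,8),
      case_names overlap_right overlap_left right left middle])
    case overlap_right
    have "x (T + d - d) = x (T + d)"
    proof (rule fine_wilf_extend_right)
      show "period_on x d k (T + d)" using Pper by (rule period_on_mono) (use \<open>0 < k\<close> in simp_all)
      show "period_on x d' k (T + d + 1)" using Qper by (rule period_on_mono) (use assms(4,7) in simp_all)
    qed (use assms(3,4) overlap_right gcd_pos in simp_all)
    then show False using Pright by simp
  next
    case overlap_left
    have "x (0 - 1) = x (0 - 1 + d)"
    proof (rule fine_wilf_extend_left)
      show "period_on x d 0 (min (T + d) (k - n + T + d'))" using Pper by (rule period_on_mono) simp_all
      show "period_on x d' (0 - 1) (min (T + d) (k - n + T + d'))"
        using Qper_prev by (rule period_on_mono) (use \<open>k < n\<close> in simp_all)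
    qed (use assms(2-6) overlap_left gcd_pos in simp_all)
    then show False using Pleft by simp
  next
    case right
    have "x T = x (T + d')" using period_onD[OF Qper, of T] right assms(3-8) by simp
    also have "\<dots> = x (T + d' + d)" using period_onD[OF Pper_next, of "T + d'"] right assms(3-8) by simp
    also have "\<dots> = x (T + d)"
      using period_onD[OF Qper, of "T + d"] right assms(3-8) by (simp add: algebra_simps)
    finally show False using Pright by simp
  next
    case left
    have "x (-1) = x (-1 - d')" using period_onD[OF Qper_prev, of "-1 - d'"] left assms(3-8) by simp
    also have "\<dots> = x (-1 - d' + d)" using period_onD[OF Pper_prev, of "-1 - d'"] left assms(3-8) by simp
    also have "\<dots> = x (-1 + d)"
      using period_onD[OF Qper_prev, of "-1 + d - d'"] left assms(3-8) by (simp add: algebra_simps)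
    finally show False using Pleft by (simp add: algebra_simps)
  next
    case middle
    have "x (d - 1) = x (2 * d - 1)" using period_onD[OF Pper, of "d - 1"] middle assms(3-8) by simp
    also have "\<dots> = x (3 * d - 1)"
      using period_onD[OF Pper, of "2 * d - 1"] middle assms(3-8) by (simp add: algebra_simps)
    also have "\<dots> = x (3 * d - 1 + d')" using period_onD[OF Qper, of "3 * d - 1"] middle assms(3-8) by simp
    also have "\<dots> = x (-1)" using per[rule_format, of "-1"] middle assms(3-8) by (simp add: algebra_simps)
    finally show False using Pleft by simp
  qed
qed

lemma no_shifted_maximal_run_same_period:
  assumes per: "\<forall>i. x (i + n) = x i"
    and "3 \<le> n" "3 * n \<le> 4 * T + 7" "0 < k" "k < n"
    and P: "maximal_run x d 0 T" and Q: "maximal_run x d k T"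
  shows False
proof -
  have "maximal_run x d (k + (-1) * n) T" using maximal_run_add_mult[OF per Q] .
  then have Qper_prev: "period_on x d (k - n) (k - n + T + d)" by (simp add: maximal_run_def)
  have Qper: "period_on x d k (k + T + d)" using Q by (simp add: maximal_run_def)
  have "n - 1 \<le> 2 * T" using assms(2,3) by presburger
  then consider "k \<le> T" | "n \<le> k + T" by linarith
  then show False
  proof cases
    case 1
    then have "x T = x (T + d)" using period_onD[OF Qper, of T] \<open>0 < k\<close> by simp
    then show False using P by (simp add: maximal_run_def)
  next
    case 2
    then have "x (-1) = x (-1 + d)" using period_onD[OF Qper_prev, of "-1"] \<open>k < n\<close> by simp
    then show False using P by (simp add: maximal_run_def)
  qed
qed

lemma maximal_runs_congruent_le:
  assumes per: "\<forall>i. x (i + n) = x i"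
    and "3 \<le> n" "1 \<le> d" "d \<le> d'" "2 * d' \<le> n" "3 * n \<le> 4 * T + 7"
    and P: "maximal_run x d a T" and Q: "maximal_run x d' b T"
  shows "a mod n = b mod n"
proof (rule ccontr)
  assume "a mod n \<noteq> b mod n"
  define k where "k = (b - a) mod n"
  have "k \<noteq> 0"
    using \<open>a mod n \<noteq> b mod n\<close> unfolding k_def by (metis mod_eq_dvd_iff dvd_eq_mod_eq_0)
  moreover have "0 \<le> k" "k < n" using \<open>3 \<le> n\<close> by (simp_all add: k_def)
  ultimately have "0 < k" "k < n" by simp_all
  define y where "y = (\<lambda>i. x (i + a))"
  have per_y: "\<forall>i. y (i + n) = y i" unfolding y_def by (metis per add.commute add.left_commute)
  have P_y: "maximal_run y d 0 T" using P maximal_run_translate[of x a d 0 T] by (simp add: y_def)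
  have "maximal_run y d' (b - a) T" using Q maximal_run_translate[of x a d' "b - a" T] by (simp add: y_def)
  from maximal_run_add_mult[OF per_y this, of "- ((b - a) div n)"]
  have Q_y: "maximal_run y d' k T" by (simp add: k_def mod_div_mult_eq minus_div_mult_eq_mod)
  show False
  proof (cases "d = d'")
    case True
    then show False using no_shifted_maximal_run_same_period[OF per_y assms(2,6) \<open>0 < k\<close> \<open>k < n\<close> P_y] Q_y by simp
  next
    case False
    then show False
      using no_shifted_maximal_run_longer_period[OF per_y assms(2,3) _ assms(5,6) \<open>0 < k\<close> \<open>k < n\<close> P_y Q_y]
        assms(4) by simp
  qed
qed

lemma maximal_runs_congruent:
  assumes "\<forall>i. x (i + n) = x i"
    and "3 \<le> n" "1 \<le> d" "1 \<le> d'" "2 * d \<le> n" "2 * d' \<le> n" "3 * n \<le> 4 * T + 7"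
    and "maximal_run x d a T" "maximal_run x d' b T"
  shows "a mod n = b mod n"
proof (cases "d \<le> d'")
  case True
  then show ?thesis using maximal_runs_congruent_le assms by blast
next
  case False
  then show ?thesis using maximal_runs_congruent_le[of x n d' d T b a] assms by simp
qed

section \<open>Binary sequences read cyclically\<close>

definition cyclic_nth :: "'a list \<Rightarrow> int \<Rightarrow> 'a" where
  "cyclic_nth s i = s ! nat (i mod int (length s))"

lemma cyclic_nth_add_length [simp]: "cyclic_nth s (i + int (length s)) = cyclic_nth s i"
  by (simp add: cyclic_nth_def)

lemma cyclic_nth_of_nat: "i < length s \<Longrightarrow> cyclic_nth s (int i) = s ! i"
  by (simp add: cyclic_nth_def)

lemma cyclic_nth_neg: "t < length s \<Longrightarrow> cyclic_nth s (- 1 - int t) = s ! (length s - 1 - t)"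
proof -
  assume "t < length s"
  then have "(- 1 - int t) mod int (length s) = (- 1 - int t + int (length s)) mod int (length s)"
    by (simp only: mod_add_self2)
  also have "\<dots> = int (length s - 1 - t)"
    using \<open>t < length s\<close> by (subst mod_pos_pos_trivial) (simp_all add: of_nat_diff)
  finally have "(- 1 - int t) mod int (length s) = int (length s - 1 - t)" .
  then show ?thesis by (simp add: cyclic_nth_def)
qed

lemma cyclic_nth_take: "0 < d \<Longrightarrow> d \<le> length s \<Longrightarrow> cyclic_nth (take d s) j = s ! nat (j mod int d)"
  by (simp add: cyclic_nth_def nat_less_iff)

lemma cyclic_nth_take_add_period:
  "d \<le> length s \<Longrightarrow> cyclic_nth (take d s) (i + int d) = cyclic_nth (take d s) i"
proof -
  assume "d \<le> length s"
  then have "length (take d s) = d" by simp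
  then show ?thesis by (metis cyclic_nth_add_length)
qed

lemma cyclic_nth_rshift:
  assumes "k < length s"
  shows "cyclic_nth (rshift k s) i = cyclic_nth s (i - int k)"
proof -
  have "rshift k s = rotate (length s - k) s"
    using assms by (cases "k = 0") (simp_all add: rshift_def rotate_drop_take)
  define j where "j = nat (i mod int (length s))"
  have "0 < int (length s)" using assms by linarith
  then have "j < length s" unfolding j_def by (subst nat_less_iff) simp_all
  have "int ((length s - k + j) mod length s) = (int (length s) - int k + i mod int (length s)) mod int (length s)"
    using assms \<open>0 < int (length s)\<close> by (simp add: j_def of_nat_mod of_nat_diff algebra_simps)
  also have "\<dots> = (i - int k) mod int (length s)"
    by (metis add.commute add_diff_eq diff_add_cancel mod_add_right_eq mod_add_self2)
  finally have "(length s - k + j) mod length s = nat ((i - int k) mod int (length s))"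
    by (metis nat_int)
  then show ?thesis
    using \<open>rshift k s = rotate (length s - k) s\<close> \<open>j < length s\<close>
    by (simp add: cyclic_nth_def nth_rotate flip: j_def)
qed

lemma nth_concat_replicate_append_take:
  assumes "i < q * length u + r" "r \<le> length u"
  shows "(concat (replicate q u) @ take r u) ! i = u ! (i mod length u)"
  using assms(1)
proof (induction q arbitrary: i)
  case 0
  then show ?case using assms(2) by simp
next
  case (Suc q)
  show ?case
  proof (cases "i < length u")
    case False
    then have "(concat (replicate (Suc q) u) @ take r u) ! i = u ! ((i - length u) mod length u)"
      using Suc by (simp add: nth_append)
    then show ?thesis using False by (simp add: le_mod_geq)
  qed (simp add: nth_append)
qed

lemma Bd_prefix:
  assumes "s \<in> Bd n c d" "1 \<le> d" "c + d \<le> n"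
  shows "\<And>i. i < c + d - 1 \<Longrightarrow> s ! i = s ! (i mod d)"
    and "s ! (c + d - 1) \<noteq> s ! ((c + d - 1) mod d)"
proof -
  define q where "q = (c + d - 1) div d"
  define r where "r = (c + d - 1) mod d"
  define u where "u = take d s"
  have len: "length s = n" and r_def': "r = c + d - 1 - q * d"
    using assms(1) by (simp_all add: Bd_def q_def r_def minus_div_mult_eq_mod)
  have "r < d" using assms(2) by (simp add: r_def)
  then have "take r s = take r u" by (simp add: u_def)
  moreover have "length u = d" using assms len by (simp add: u_def)
  moreover have "q * d + r = c + d - 1" by (simp add: q_def r_def)
  ultimately have take_eq: "take (c + d) s = (concat (replicate q u) @ take r u) @ [\<not> s ! r]"
    and len_P: "length (concat (replicate q u) @ take r u) = c + d - 1"
    using assms(1) \<open>r < d\<close> by (auto simp: Bd_def Let_def u_def r_def' q_def length_concat sum_list_replicate)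
  have s_nth: "s ! i = take (c + d) s ! i" if "i < c + d" for i
    using that assms(3) len by simp
  show "s ! i = s ! (i mod d)" if "i < c + d - 1" for i
  proof -
    have "s ! i = take (c + d) s ! i" using s_nth that by simp
    also have "\<dots> = (concat (replicate q u) @ take r u) ! i"
      unfolding take_eq by (rule nth_append_left) (use len_P that in simp)
    also have "\<dots> = u ! (i mod d)"
      using nth_concat_replicate_append_take[of i q u r] that \<open>r < d\<close> \<open>length u = d\<close> \<open>q * d + r = c + d - 1\<close>
      by (simp add: mult.commute)
    finally show ?thesis using assms(2) by (simp add: u_def)
  qed
  have "s ! (c + d - 1) = take (c + d) s ! (c + d - 1)" using s_nth assms(2) by simp
  also have "\<dots> = (\<not> s ! r)"
    unfolding take_eq using nth_append_length[of _ "\<not> s ! r" "[]"] len_P by metis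
  finally show "s ! (c + d - 1) \<noteq> s ! ((c + d - 1) mod d)" by (simp add: r_def)
qed

lemma Bd_prefix_cyclic:
  assumes "s \<in> Bd n c d" "1 \<le> d" "c + d \<le> n"
  shows "\<And>j. 0 \<le> j \<Longrightarrow> j < int c + int d - 1 \<Longrightarrow> cyclic_nth s j = cyclic_nth (take d s) j"
    and "cyclic_nth s (int c + int d - 1) \<noteq> cyclic_nth (take d s) (int c + int d - 1)"
proof -
  have len: "length s = n" using assms(1) by (simp add: Bd_def)
  have cyc: "cyclic_nth s (int i) = s ! i" "cyclic_nth (take d s) (int i) = s ! (i mod d)" if "i < n" for i
    using that assms len by (simp_all add: cyclic_nth_of_nat cyclic_nth_take nat_mod_distrib)
  show "cyclic_nth s j = cyclic_nth (take d s) j" if "0 \<le> j" "j < int c + int d - 1" for j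
    using cyc[of "nat j"] Bd_prefix(1)[OF assms, of "nat j"] that assms(3) by simp
  show "cyclic_nth s (int c + int d - 1) \<noteq> cyclic_nth (take d s) (int c + int d - 1)"
    using cyc[of "c + d - 1"] Bd_prefix(2)[OF assms] assms(2,3) by (simp add: of_nat_diff)
qed

lemma add_d_cyclic:
  assumes "1 \<le> d" "d \<le> length s"
  shows "add_d d s =
    (LEAST t. t < length s \<and> cyclic_nth s (- 1 - int t) \<noteq> cyclic_nth (take d s) (- 1 - int t))"
proof -
  have "s ! nat ((int d - 1 - int t) mod int d) = cyclic_nth (take d s) (- 1 - int t)" for t
  proof -
    have "(int d - 1 - int t) mod int d = (- 1 - int t) mod int d"
      using mod_add_self2[of "- 1 - int t" "int d"] by (simp add: algebra_simps)
    then show ?thesis using assms by (simp add: cyclic_nth_take)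
  qed
  moreover have "s ! (length s - 1 - t) = cyclic_nth s (- 1 - int t)" if "t < length s" for t
    using cyclic_nth_neg[OF that] by simp
  ultimately have "(\<lambda>t. t < length s \<and> s ! (length s - 1 - t) \<noteq> s ! nat ((int d - 1 - int t) mod int d))
      = (\<lambda>t. t < length s \<and> cyclic_nth s (- 1 - int t) \<noteq> cyclic_nth (take d s) (- 1 - int t))"
    by auto
  then show ?thesis unfolding add_d_def by (rule arg_cong)
qed

lemma add_d_spec:
  assumes B: "s \<in> Bd n c d" and "1 \<le> d" "1 \<le> c" "c + d \<le> n"
  defines "t \<equiv> add_d d s"
  shows "t < n"
    and "\<And>j. - int t \<le> j \<Longrightarrow> j < 0 \<Longrightarrow> cyclic_nth s j = cyclic_nth (take d s) j"
    and "cyclic_nth s (- int t - 1) \<noteq> cyclic_nth (take d s) (- int t - 1)"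
proof -
  have len: "length s = n" using B by (simp add: Bd_def)
  define x where "x = cyclic_nth s"
  define y where "y = cyclic_nth (take d s)"
  define P where "P = (\<lambda>t. t < n \<and> x (- 1 - int t) \<noteq> y (- 1 - int t))"
  have t_Least: "t = Least P"
    using add_d_cyclic[of d s] assms(2,4) len by (simp add: t_def P_def x_def y_def)
  have x_per: "x (i + int n) = x i" for i using cyclic_nth_add_length[of s i] len by (simp add: x_def)
  have y_per: "y (i + int d) = y i" for i
    using cyclic_nth_take_add_period[of d s i] assms(4) len by (simp add: y_def)
  note prefix = Bd_prefix_cyclic[OF B assms(2,4), folded x_def y_def]
  have "\<exists>t. P t"
  proof (rule ccontr)
    assume "\<nexists>t. P t"
    then have agree: "x j = y j" if "- int n \<le> j" "j < 0" for j
      using that spec[of "\<lambda>t. \<not> P t" "nat (- 1 - j)"] by (simp add: P_def)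
    have "x (int c + int d - 1) = y (int c - 1 - int n + int d)"
      using x_per[of "int c + int d - 1 - int n"] agree[of "int c + int d - 1 - int n"] assms(3,4)
      by (simp add: algebra_simps)
    also have "\<dots> = x (int c - 1)"
      using y_per x_per[of "int c - 1 - int n"] agree[of "int c - 1 - int n"] assms(3,4) by simp
    also have "\<dots> = y (int c + int d - 1)"
      using prefix(1)[of "int c - 1"] y_per[of "int c - 1"] assms(2,3) by (simp add: algebra_simps)
    finally show False using prefix(2) by simp
  qed
  then have "P t" unfolding t_Least by (rule LeastI_ex)
  have minus_one: "- int t - 1 = - 1 - int t" by simp
  show "t < n" "x (- int t - 1) \<noteq> y (- int t - 1)"
    using \<open>P t\<close> unfolding minus_one by (simp_all add: P_def)
  show "x j = y j" if "- int t \<le> j" "j < 0" for j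
    using not_less_Least[of "nat (- 1 - j)" P, folded t_Least] \<open>P t\<close> that by (simp add: P_def)
qed

lemma Bd_maximal_run:
  assumes "s \<in> Bd n c d" "1 \<le> d" "1 \<le> c" "c + d \<le> n"
  shows "maximal_run (cyclic_nth s) (int d) (- int (add_d d s)) (int (add_d d s) + int c - 1)"
proof -
  note suffix = add_d_spec[OF assms] and prefix = Bd_prefix_cyclic[OF assms(1,2,4)]
  have "maximal_run (cyclic_nth s) (int d) (- int (add_d d s))
      ((int c + int d - 1) - (- int (add_d d s)) - int d)"
  proof (rule maximal_run_of_agreement)
    show "\<forall>i. cyclic_nth (take d s) (i + int d) = cyclic_nth (take d s) i"
      using cyclic_nth_take_add_period[of d s] assms(1,4) by (simp add: Bd_def)
    show "cyclic_nth s j = cyclic_nth (take d s) j"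
      if "- int (add_d d s) \<le> j" "j < int c + int d - 1" for j
      using suffix(2) prefix(1) that by (cases "j < 0") simp_all
  qed (use assms(2,3) suffix(3) prefix(2) in simp_all)
  then show ?thesis by (simp add: algebra_simps)
qed

lemma Bd_disjoint:
  assumes "1 \<le> d1" "d1 < d2" "d2 \<le> c" "c + d2 \<le> n" "s \<in> Bd n c d1" "s \<in> Bd n c d2"
  shows False
proof -
  define x where "x = cyclic_nth s"
  have run1: "maximal_run x (int d1) (- int (add_d d1 s)) (int (add_d d1 s) + int c - 1)"
    using Bd_maximal_run[OF assms(5)] assms(1-4) by (simp add: x_def)
  have run2: "maximal_run x (int d2) (- int (add_d d2 s)) (int (add_d d2 s) + int c - 1)"
    using Bd_maximal_run[OF assms(6)] assms(1-4) by (simp add: x_def)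
  have break: "x (int c - 1) \<noteq> x (int c - 1 + int d1)" using run1 by (simp add: maximal_run_def)
  have per1: "period_on x (int d1) 0 (int c + int d1 - 1)"
    using run1 unfolding maximal_run_def by (auto intro: period_on_mono)
  have per2: "period_on x (int d2) 0 (int c + int d2 - 1)"
    using run2 unfolding maximal_run_def by (auto intro: period_on_mono)
  have "period_on x (gcd (int d1) (int d2)) 0 (int c + int d1 - 1)"
  proof (rule fine_wilf[OF per1])
    show "period_on x (int d2) 0 (int c + int d1 - 1)" using per2 by (rule period_on_mono) (use assms(2) in simp_all)
    have "1 \<le> gcd (int d1) (int d2)" using assms(1) by (simp add: int_one_le_iff_zero_less)
    then show "int d1 + int d2 - gcd (int d1) (int d2) \<le> int c + int d1 - 1 - 0" using assms(3) by simp
  qed (use assms(1,2) in simp_all)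
  then have "x (int c - 1) = x (int c + int d1 - 1 - int d2)"
    by (rule period_on_dvd) (use assms(1-3) in \<open>simp_all add: gcd_pos_int\<close>)
  also have "\<dots> = x (int c + int d1 - 1)"
    using period_onD[OF per2, of "int c + int d1 - 1 - int d2"] assms(1-3) by simp
  finally show False using break by (simp add: algebra_simps)
qed

lemma Bd_unique:
  assumes "n div 2 \<le> c" "d1 \<in> drange n c" "d2 \<in> drange n c" "s \<in> Bd n c d1" "s \<in> Bd n c d2"
  shows "d1 = d2"
proof -
  have bounds: "1 \<le> d" "d \<le> c" "c + d \<le> n" if "d \<in> drange n c" for d
    using that assms(1) by (auto simp: drange_def)
  show ?thesis
    using Bd_disjoint[of d1 d2 c n s] Bd_disjoint[of d2 d1 c n s] bounds assms(2-5)
    by (metis linorder_neqE_nat)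
qed

lemma add_eq_add_d:
  assumes "n div 2 \<le> c" "d \<in> drange n c" "s \<in> Bd n c d"
  shows "add n c s = add_d d s"
proof -
  have "(THE d. d \<in> drange n c \<and> s \<in> Bd n c d) = d"
    using assms Bd_unique[OF assms(1)] by blast
  then show ?thesis by (simp add: add_def)
qed

lemma Bc_maximal_run:
  assumes "n div 2 \<le> c" "s \<in> Bc n c"
  obtains d where "1 \<le> d" "2 * d \<le> n"
    "maximal_run (cyclic_nth s) (int d) (- int (add n c s)) (int (add n c s) + int c - 1)"
proof -
  obtain d where d: "d \<in> drange n c" "s \<in> Bd n c d" using assms(2) by (auto simp: Bc_def)
  then have "1 \<le> d" "2 * d \<le> n" "1 \<le> c" "c + d \<le> n" using assms(1) by (auto simp: drange_def)
  then show ?thesis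
    using that Bd_maximal_run[OF d(2)] add_eq_add_d[OF assms(1) d] by simp
qed

lemma Bc_rshift_same_add:
  assumes "3 \<le> n" "n div 2 \<le> c" "k < n" "s \<in> Bc n c" "rshift k s \<in> Bc n c"
    and same_add: "add n c (rshift k s) = add n c s"
    and long: "3 * int n \<le> 4 * (int (add n c s) + int c - 1) + 7"
  shows "k = 0"
proof -
  define t where "t = add n c s"
  define T where "T = int t + int c - 1"
  have len: "length s = n" using assms(4) by (auto simp: Bc_def Bd_def)
  obtain d where d: "1 \<le> d" "2 * d \<le> n" and run: "maximal_run (cyclic_nth s) (int d) (- int t) T"
    by (rule Bc_maximal_run[OF assms(2,4), folded t_def, folded T_def])
  obtain d' where d': "1 \<le> d'" "2 * d' \<le> n"
    and run': "maximal_run (cyclic_nth (rshift k s)) (int d') (- int t) T"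
    by (rule Bc_maximal_run[OF assms(2,5), unfolded same_add, folded t_def, folded T_def])
  have shift: "cyclic_nth (rshift k s) = (\<lambda>i. cyclic_nth s (i + - int k))"
    using cyclic_nth_rshift[of k s] assms(3) len by auto
  have run'': "maximal_run (cyclic_nth s) (int d') (- int t + - int k) T"
    using run' unfolding shift maximal_run_translate .
  have "\<forall>i. cyclic_nth s (i + int n) = cyclic_nth s i"
    using len cyclic_nth_add_length by metis
  moreover have "3 * int n \<le> 4 * T + 7" using long by (simp add: T_def t_def)
  ultimately have "- int t mod int n = (- int t + - int k) mod int n"
    using maximal_runs_congruent[OF _ _ _ _ _ _ _ run run''] assms(1) d d' by simp
  then show "k = 0" using assms(3) by (auto simp: mod_eq_dvd_iff dest: dvd_imp_le)
qed

theorem lemma9: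
  fixes n \<omega> :: nat
  assumes "n \<ge> 3" and "\<omega> \<ge> (3 * n) div 4"
  defines "c \<equiv> (n + 1) div 2"
  shows "\<forall>s\<in>{s \<in> Rset n c. int (add n c s) = int \<omega> - int c}.
         \<forall>s'\<in>{s \<in> Rset n c. int (add n c s) = int \<omega> - int c}.
           s \<noteq> s' \<longrightarrow> \<not> (\<exists>k<n. s' = rshift k s)"
proof (intro ballI impI notI)
  fix s s'
  assume S: "s \<in> {s \<in> Rset n c. int (add n c s) = int \<omega> - int c}"
    and S': "s' \<in> {s \<in> Rset n c. int (add n c s) = int \<omega> - int c}"
    and "s \<noteq> s'" and "\<exists>k<n. s' = rshift k s"
  then obtain k where k: "k < n" "s' = rshift k s" by blast
  have "k = 0"
  proof (rule Bc_rshift_same_add[OF assms(1) _ k(1)])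
    show "n div 2 \<le> c" by (simp add: c_def)
    show "s \<in> Bc n c" "rshift k s \<in> Bc n c" using S S' k(2) by (simp_all add: Rset_def)
    show "add n c (rshift k s) = add n c s" using S S' k(2) by simp
    have "int (add n c s) = int \<omega> - int c" using S by simp
    then show "3 * int n \<le> 4 * (int (add n c s) + int c - 1) + 7" using assms(2) by presburger
  qed
  then show False using \<open>s \<noteq> s'\<close> k(2) by (simp add: rshift_def)
qed

end
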